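(* Consider a network flow market on a directed series-parallel network with source $s$ and sink $t$, where each edge $e$ (a good) has capacity $c_e>0$ and delay cost $d_e\ge0$ per unit of flow. Each agent $i\in A$ must send $r_i\ge0$ units of flow from $s$ to $t$ (its covering constraints are flow conservation at all nodes other than $s,t$, net outflow $r_i$ at $s$, and nonnegativity), and the allocation must satisfy $\sum_if_{ie}\le c_e$ for every edge. Assume the maximum $s$–$t$ flow value is at least $\sum_{i\in A}r_i$. Then this market satisfies extensibility.
   Context: An allocation $(f_{ie})$ is supply respecting if $\sum_if_{ie}\le c_e$ for every edge $e$. The delay of agent $i$ is $\sum_ed_ef_{ie}$. For a set of agents $S$, an allocation is jointly optimal for $S$ if every $i\in S$ sends an $s$–$t$ flow of value $r_i$, it is supply respecting, and it minimizes $\sum_{i\in S}\sum_ed_ef_{ie}$ among such allocations. A market satisfies extensibility if for every $S\subset A$, every allocation jointly optimal for $S$ and every $i\in A\setminus S$, there is an allocation jointly optimal for $S\cup\{i\}$ in which each agent of $S$ has the same delay as before. A series-parallel network (between $s$ and $t$) is one obtained from single edges by repeated series and parallel composition. *)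

theory Defs
  imports Complex_Main
begin

text \<open>Directed multigraph: edges of type 'e, each edge e goes from src e to dst e.
  A network is given by a (finite) edge set E together with src and dst.\<close>

definition nodes :: "('e \<Rightarrow> 'v) \<Rightarrow> ('e \<Rightarrow> 'v) \<Rightarrow> 'e set \<Rightarrow> 'v set" where
  "nodes src dst E = src ` E \<union> dst ` E"

inductive series_parallel :: "('e \<Rightarrow> 'v) \<Rightarrow> ('e \<Rightarrow> 'v) \<Rightarrow> 'e set \<Rightarrow> 'v \<Rightarrow> 'v \<Rightarrow> bool"
  for src :: "'e \<Rightarrow> 'v" and dst :: "'e \<Rightarrow> 'v" where
  single: "src e \<noteq> dst e \<Longrightarrow> series_parallel src dst {e} (src e) (dst e)"
| series: "\<lbrakk> series_parallel src dst E1 s m; series_parallel src dst E2 m t;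
             E1 \<inter> E2 = {}; nodes src dst E1 \<inter> nodes src dst E2 = {m} \<rbrakk>
           \<Longrightarrow> series_parallel src dst (E1 \<union> E2) s t"
| parallel: "\<lbrakk> series_parallel src dst E1 s t; series_parallel src dst E2 s t;
             E1 \<inter> E2 = {}; nodes src dst E1 \<inter> nodes src dst E2 = {s, t} \<rbrakk>
           \<Longrightarrow> series_parallel src dst (E1 \<union> E2) s t"

definition outflow :: "('e \<Rightarrow> 'v) \<Rightarrow> 'e set \<Rightarrow> ('e \<Rightarrow> real) \<Rightarrow> 'v \<Rightarrow> real" where
  "outflow src E \<phi> u = (\<Sum>e\<in>{e\<in>E. src e = u}. \<phi> e)"

definition inflow :: "('e \<Rightarrow> 'v) \<Rightarrow> 'e set \<Rightarrow> ('e \<Rightarrow> real) \<Rightarrow> 'v \<Rightarrow> real" where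
  "inflow dst E \<phi> u = (\<Sum>e\<in>{e\<in>E. dst e = u}. \<phi> e)"

definition is_st_flow ::
  "('e \<Rightarrow> 'v) \<Rightarrow> ('e \<Rightarrow> 'v) \<Rightarrow> 'e set \<Rightarrow> 'v \<Rightarrow> 'v \<Rightarrow> ('e \<Rightarrow> real) \<Rightarrow> real \<Rightarrow> bool" where
  "is_st_flow src dst E s t \<phi> v \<longleftrightarrow>
     (\<forall>e\<in>E. 0 \<le> \<phi> e) \<and>
     (\<forall>u\<in>nodes src dst E. u \<noteq> s \<and> u \<noteq> t \<longrightarrow> inflow dst E \<phi> u = outflow src E \<phi> u) \<and>
     outflow src E \<phi> s - inflow dst E \<phi> s = v"

definition max_flow_value ::
  "('e \<Rightarrow> 'v) \<Rightarrow> ('e \<Rightarrow> 'v) \<Rightarrow> 'e set \<Rightarrow> 'v \<Rightarrow> 'v \<Rightarrow> ('e \<Rightarrow> real) \<Rightarrow> real" where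
  "max_flow_value src dst E s t c =
     Sup {v. \<exists>\<phi>. is_st_flow src dst E s t \<phi> v \<and> (\<forall>e\<in>E. \<phi> e \<le> c e)}"

text \<open>Allocation f: agent i sends f i e on edge e.\<close>
definition supply_respecting :: "'e set \<Rightarrow> ('e \<Rightarrow> real) \<Rightarrow> 'a set \<Rightarrow> ('a \<Rightarrow> 'e \<Rightarrow> real) \<Rightarrow> bool" where
  "supply_respecting E c S f \<longleftrightarrow> (\<forall>e\<in>E. (\<Sum>i\<in>S. f i e) \<le> c e)"

definition agent_delay :: "'e set \<Rightarrow> ('e \<Rightarrow> real) \<Rightarrow> ('e \<Rightarrow> real) \<Rightarrow> real" where
  "agent_delay E d \<phi> = (\<Sum>e\<in>E. d e * \<phi> e)"

definition feasible_for ::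
  "('e \<Rightarrow> 'v) \<Rightarrow> ('e \<Rightarrow> 'v) \<Rightarrow> 'e set \<Rightarrow> 'v \<Rightarrow> 'v \<Rightarrow> ('e \<Rightarrow> real) \<Rightarrow> ('a \<Rightarrow> real)
   \<Rightarrow> 'a set \<Rightarrow> ('a \<Rightarrow> 'e \<Rightarrow> real) \<Rightarrow> bool" where
  "feasible_for src dst E s t c r S f \<longleftrightarrow>
     (\<forall>i\<in>S. is_st_flow src dst E s t (f i) (r i)) \<and> supply_respecting E c S f"

definition jointly_optimal ::
  "('e \<Rightarrow> 'v) \<Rightarrow> ('e \<Rightarrow> 'v) \<Rightarrow> 'e set \<Rightarrow> 'v \<Rightarrow> 'v \<Rightarrow> ('e \<Rightarrow> real) \<Rightarrow> ('e \<Rightarrow> real)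
   \<Rightarrow> ('a \<Rightarrow> real) \<Rightarrow> 'a set \<Rightarrow> ('a \<Rightarrow> 'e \<Rightarrow> real) \<Rightarrow> bool" where
  "jointly_optimal src dst E s t c d r S f \<longleftrightarrow>
     feasible_for src dst E s t c r S f \<and>
     (\<forall>g. feasible_for src dst E s t c r S g \<longrightarrow>
          (\<Sum>i\<in>S. agent_delay E d (f i)) \<le> (\<Sum>i\<in>S. agent_delay E d (g i)))"

definition extensible ::
  "('e \<Rightarrow> 'v) \<Rightarrow> ('e \<Rightarrow> 'v) \<Rightarrow> 'e set \<Rightarrow> 'v \<Rightarrow> 'v \<Rightarrow> ('e \<Rightarrow> real) \<Rightarrow> ('e \<Rightarrow> real)
   \<Rightarrow> ('a \<Rightarrow> real) \<Rightarrow> 'a set \<Rightarrow> bool" where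
  "extensible src dst E s t c d r A \<longleftrightarrow>
     (\<forall>S f i. S \<subseteq> A \<and> jointly_optimal src dst E s t c d r S f \<and> i \<in> A - S \<longrightarrow>
        (\<exists>g. jointly_optimal src dst E s t c d r (insert i S) g \<and>
             (\<forall>j\<in>S. agent_delay E d (g j) = agent_delay E d (f j))))"

end

theory Submission
  imports Defs "HOL-Analysis.Analysis"
begin

text \<open>
  A jointly optimal allocation aggregates to a minimum-delay \<open>s\<close>-\<open>t\<close> flow of the total demand
  (splitting a cheaper flow in proportion to the demands would give a better allocation), and
  conversely every allocation whose aggregate is such a flow is jointly optimal. On a
  series-parallel network minimum-delay flows are monotone in the value: an optimal flow of
  value \<open>v\<close> is dominated edgewise by an optimal flow of any larger feasible value. This is
  proved along the series-parallel decomposition; the only non-trivial case is a parallel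
  composition whose new optimum routes less through one branch, where a convex-combination
  exchange on the other branch shows that keeping the old flow on the first branch costs no
  more. A new agent then receives the difference between a dominating optimal flow for the
  enlarged demand and the old aggregate, while the old agents keep their flows.
\<close>

section \<open>Flows on unions of edge sets\<close>

lemma nodes_Un: "nodes src dst (E1 \<union> E2) = nodes src dst E1 \<union> nodes src dst E2"
  by (auto simp: nodes_def)

lemma inflow_Un_left:
  "u \<notin> nodes src dst E2 \<Longrightarrow> inflow dst (E1 \<union> E2) F u = inflow dst E1 F u"
  unfolding inflow_def nodes_def by (rule sum.cong) auto

lemma outflow_Un_left:
  "u \<notin> nodes src dst E2 \<Longrightarrow> outflow src (E1 \<union> E2) F u = outflow src E1 F u"
  unfolding outflow_def nodes_def by (rule sum.cong) auto

lemma inflow_Un_right: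
  "u \<notin> nodes src dst E1 \<Longrightarrow> inflow dst (E1 \<union> E2) F u = inflow dst E2 F u"
  using inflow_Un_left[of u src dst E1 E2] by (simp add: Un_commute)

lemma outflow_Un_right:
  "u \<notin> nodes src dst E1 \<Longrightarrow> outflow src (E1 \<union> E2) F u = outflow src E2 F u"
  using outflow_Un_left[of u src dst E1 E2] by (simp add: Un_commute)

lemma inflow_Un:
  "finite E1 \<Longrightarrow> finite E2 \<Longrightarrow> E1 \<inter> E2 = {} \<Longrightarrow>
   inflow dst (E1 \<union> E2) F u = inflow dst E1 F u + inflow dst E2 F u"
  unfolding inflow_def by (subst sum.union_disjoint[symmetric]) (auto intro: sum.cong)

lemma outflow_Un:
  "finite E1 \<Longrightarrow> finite E2 \<Longrightarrow> E1 \<inter> E2 = {} \<Longrightarrow>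
   outflow src (E1 \<union> E2) F u = outflow src E1 F u + outflow src E2 F u"
  unfolding outflow_def by (subst sum.union_disjoint[symmetric]) (auto intro: sum.cong)

lemma agent_delay_Un:
  "finite E1 \<Longrightarrow> finite E2 \<Longrightarrow> E1 \<inter> E2 = {} \<Longrightarrow>
   agent_delay (E1 \<union> E2) d F = agent_delay E1 d F + agent_delay E2 d F"
  unfolding agent_delay_def by (rule sum.union_disjoint)

lemma agent_delay_cong: "(\<And>e. e \<in> E \<Longrightarrow> F e = G e) \<Longrightarrow> agent_delay E d F = agent_delay E d G"
  unfolding agent_delay_def by simp

lemma agent_delay_lincomb:
  "agent_delay E d (\<lambda>e. a * F e + b * G e) = a * agent_delay E d F + b * agent_delay E d G"
  unfolding agent_delay_def by (simp add: sum.distrib sum_distrib_left algebra_simps)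

lemma agent_delay_sum:
  "finite S \<Longrightarrow> agent_delay E d (\<lambda>e. \<Sum>j\<in>S. f j e) = (\<Sum>j\<in>S. agent_delay E d (f j))"
  unfolding agent_delay_def by (simp add: sum_distrib_left sum.swap[of _ E])

lemma agent_delay_nonneg:
  "(\<And>e. e \<in> E \<Longrightarrow> 0 \<le> d e) \<Longrightarrow> (\<And>e. e \<in> E \<Longrightarrow> 0 \<le> F e) \<Longrightarrow> 0 \<le> agent_delay E d F"
  unfolding agent_delay_def by (simp add: sum_nonneg)

lemma is_st_flow_cong:
  assumes "is_st_flow src dst E s t F v" "\<And>e. e \<in> E \<Longrightarrow> F e = G e"
  shows "is_st_flow src dst E s t G v"
proof -
  have "inflow dst E F = inflow dst E G" "outflow src E F = outflow src E G"
    using assms(2) by (auto simp: inflow_def outflow_def)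
  with assms show ?thesis by (auto simp: is_st_flow_def)
qed

lemma is_st_flow_lincomb:
  assumes "is_st_flow src dst E s t F v" "is_st_flow src dst E s t G w"
    and "\<And>e. e \<in> E \<Longrightarrow> 0 \<le> a * F e + b * G e"
  shows "is_st_flow src dst E s t (\<lambda>e. a * F e + b * G e) (a * v + b * w)"
proof -
  have "inflow dst E (\<lambda>e. a * F e + b * G e) u = a * inflow dst E F u + b * inflow dst E G u"
    and "outflow src E (\<lambda>e. a * F e + b * G e) u = a * outflow src E F u + b * outflow src E G u"
    for u unfolding inflow_def outflow_def by (simp_all add: sum.distrib sum_distrib_left)
  with assms show ?thesis by (auto simp: is_st_flow_def algebra_simps)
qed

lemma is_st_flow_scale:
  assumes "is_st_flow src dst E s t F v" "0 \<le> a"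
  shows "is_st_flow src dst E s t (\<lambda>e. a * F e) (a * v)"
  using is_st_flow_lincomb[OF assms(1) assms(1), of a 0] assms by (simp add: is_st_flow_def)

lemma is_st_flow_diff:
  assumes "is_st_flow src dst E s t F v" "is_st_flow src dst E s t G w"
    and "\<And>e. e \<in> E \<Longrightarrow> F e \<le> G e"
  shows "is_st_flow src dst E s t (\<lambda>e. G e - F e) (w - v)"
  using is_st_flow_lincomb[OF assms(1,2), of "-1" 1] assms(3) by simp

lemma is_st_flow_sum:
  assumes "finite S" "\<And>j. j \<in> S \<Longrightarrow> is_st_flow src dst E s t (f j) (r j)"
  shows "is_st_flow src dst E s t (\<lambda>e. \<Sum>j\<in>S. f j e) (\<Sum>j\<in>S. r j)"
  using assms
proof (induction S rule: finite_induct)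
  case empty
  then show ?case by (simp add: is_st_flow_def inflow_def outflow_def)
next
  case (insert j S)
  then have "is_st_flow src dst E s t (\<lambda>e. 1 * f j e + 1 * (\<Sum>j\<in>S. f j e)) (1 * r j + 1 * (\<Sum>j\<in>S. r j))"
    by (intro is_st_flow_lincomb) (auto simp: is_st_flow_def)
  with insert.hyps show ?case by simp
qed

lemma is_st_flow_sink_value:
  assumes "finite E" "s \<noteq> t" "is_st_flow src dst E s t F v"
  shows "inflow dst E F t - outflow src E F t = v"
proof -
  define N where "N = nodes src dst E \<union> {s, t}"
  define net where "net u = outflow src E F u - inflow dst E F u" for u
  have "finite N" using assms(1) by (simp add: N_def nodes_def)
  have "(\<Sum>u\<in>N. outflow src E F u) = sum F E"
    unfolding outflow_def using \<open>finite N\<close> assms(1)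
    by (subst sum.group[symmetric]) (auto simp: N_def nodes_def)
  moreover have "(\<Sum>u\<in>N. inflow dst E F u) = sum F E"
    unfolding inflow_def using \<open>finite N\<close> assms(1)
    by (subst sum.group[symmetric]) (auto simp: N_def nodes_def)
  ultimately have "sum net N = 0"
    by (simp add: net_def sum_subtractf)
  moreover have "sum net (N - {s} - {t}) = 0"
    using assms(3) by (intro sum.neutral) (auto simp: N_def net_def is_st_flow_def)
  moreover have "sum net N = net s + (net t + sum net (N - {s} - {t}))"
    using \<open>finite N\<close> assms(2) sum.remove[of N s net] sum.remove[of "N - {s}" t net]
    by (simp add: N_def)
  ultimately have "net s + net t = 0"
    by simp
  with assms(3) show ?thesis by (simp add: net_def is_st_flow_def)
qed

lemma conservation_Un_left:
  assumes "is_st_flow src dst (E1 \<union> E2) s t F v"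
    and "u \<in> nodes src dst E1" "u \<notin> nodes src dst E2" "u \<noteq> s" "u \<noteq> t"
  shows "inflow dst E1 F u = outflow src E1 F u"
proof -
  have "inflow dst (E1 \<union> E2) F u = outflow src (E1 \<union> E2) F u"
    using assms unfolding is_st_flow_def nodes_Un by blast
  with assms(3) show ?thesis
    by (simp add: inflow_Un_left outflow_Un_left)
qed

lemma conservation_Un_right:
  assumes "is_st_flow src dst (E1 \<union> E2) s t F v"
    and "u \<in> nodes src dst E2" "u \<notin> nodes src dst E1" "u \<noteq> s" "u \<noteq> t"
  shows "inflow dst E2 F u = outflow src E2 F u"
proof -
  have "inflow dst (E1 \<union> E2) F u = outflow src (E1 \<union> E2) F u"
    using assms unfolding is_st_flow_def nodes_Un by blast
  with assms(3) show ?thesis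
    by (simp add: inflow_Un_right outflow_Un_right)
qed

lemma is_st_flow_parallel_split:
  assumes "finite E1" "finite E2" "E1 \<inter> E2 = {}"
    and "nodes src dst E1 \<inter> nodes src dst E2 = {s, t}"
    and "is_st_flow src dst (E1 \<union> E2) s t F v"
  obtains v1 v2 where "v = v1 + v2"
    and "is_st_flow src dst E1 s t F v1" "is_st_flow src dst E2 s t F v2"
proof
  let ?net = "\<lambda>E. outflow src E F s - inflow dst E F s"
  have junction: "x = s \<or> x = t" if "x \<in> nodes src dst E1" "x \<in> nodes src dst E2" for x
    using that assms(4) by blast
  show "v = ?net E1 + ?net E2"
    using assms(5) by (simp add: is_st_flow_def inflow_Un[OF assms(1-3)] outflow_Un[OF assms(1-3)])
  have "inflow dst E1 F u = outflow src E1 F u"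
    if "u \<in> nodes src dst E1" "u \<noteq> s" "u \<noteq> t" for u
    using that junction by (intro conservation_Un_left[OF assms(5)]) auto
  with assms(5) show "is_st_flow src dst E1 s t F (?net E1)"
    by (simp add: is_st_flow_def)
  have "inflow dst E2 F u = outflow src E2 F u"
    if "u \<in> nodes src dst E2" "u \<noteq> s" "u \<noteq> t" for u
    using that junction by (intro conservation_Un_right[OF assms(5)]) auto
  with assms(5) show "is_st_flow src dst E2 s t F (?net E2)"
    by (simp add: is_st_flow_def)
qed

lemma is_st_flow_parallel_join:
  assumes "finite E1" "finite E2" "E1 \<inter> E2 = {}"
    and "nodes src dst E1 \<inter> nodes src dst E2 = {s, t}"
    and "is_st_flow src dst E1 s t F v1" "is_st_flow src dst E2 s t F v2"
  shows "is_st_flow src dst (E1 \<union> E2) s t F (v1 + v2)"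
proof -
  have "inflow dst (E1 \<union> E2) F u = outflow src (E1 \<union> E2) F u"
    if u: "u \<in> nodes src dst (E1 \<union> E2)" "u \<noteq> s" "u \<noteq> t" for u
  proof -
    consider "u \<in> nodes src dst E1" "u \<notin> nodes src dst E2"
      | "u \<in> nodes src dst E2" "u \<notin> nodes src dst E1"
      using u assms(4) unfolding nodes_Un by blast
    then show ?thesis
    proof cases
      case 1
      with u assms(5) have "inflow dst E1 F u = outflow src E1 F u"
        unfolding is_st_flow_def by blast
      with 1 show ?thesis
        by (simp add: inflow_Un_left outflow_Un_left)
    next
      case 2
      with u assms(6) have "inflow dst E2 F u = outflow src E2 F u"
        unfolding is_st_flow_def by blast
      with 2 show ?thesis
        by (simp add: inflow_Un_right outflow_Un_right)
    qed
  qed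
  moreover have "outflow src (E1 \<union> E2) F s - inflow dst (E1 \<union> E2) F s = v1 + v2"
    using assms(5,6) by (simp add: is_st_flow_def inflow_Un[OF assms(1-3)] outflow_Un[OF assms(1-3)])
  moreover have "\<forall>e\<in>E1 \<union> E2. 0 \<le> F e"
    using assms(5,6) by (auto simp: is_st_flow_def)
  ultimately show ?thesis
    unfolding is_st_flow_def by blast
qed

lemma is_st_flow_series_split:
  assumes "finite E1" "finite E2" "E1 \<inter> E2 = {}" "nodes src dst E1 \<inter> nodes src dst E2 = {m}"
    and "s \<noteq> m" "m \<noteq> t" "s \<in> nodes src dst E1" "t \<in> nodes src dst E2"
    and "is_st_flow src dst (E1 \<union> E2) s t F v"
  shows "is_st_flow src dst E1 s m F v" "is_st_flow src dst E2 m t F v"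
proof -
  have s2: "s \<notin> nodes src dst E2"
    using assms(4,5,7) by blast
  have t1: "t \<notin> nodes src dst E1"
    using assms(4,6,8) by (metis IntI singletonD)
  have "inflow dst E1 F u = outflow src E1 F u"
    if "u \<in> nodes src dst E1" "u \<noteq> s" "u \<noteq> m" for u
    using that assms(4) t1 by (intro conservation_Un_left[OF assms(9)]) auto
  with assms(9) s2 show flow1: "is_st_flow src dst E1 s m F v"
    by (simp add: is_st_flow_def inflow_Un_left outflow_Un_left)
  have "inflow dst E2 F u = outflow src E2 F u"
    if "u \<in> nodes src dst E2" "u \<noteq> m" "u \<noteq> t" for u
    using that assms(4) s2 by (intro conservation_Un_right[OF assms(9)]) auto
  moreover have "outflow src E2 F m - inflow dst E2 F m = v"
  proof -
    have "m \<in> nodes src dst (E1 \<union> E2)"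
      using assms(4) by (auto simp: nodes_Un)
    then have "inflow dst (E1 \<union> E2) F m = outflow src (E1 \<union> E2) F m"
      using assms(5,6,9) unfolding is_st_flow_def by metis
    moreover have "inflow dst E1 F m - outflow src E1 F m = v"
      by (rule is_st_flow_sink_value[OF assms(1,5) flow1])
    ultimately show ?thesis
      unfolding inflow_Un[OF assms(1-3)] outflow_Un[OF assms(1-3)] by linarith
  qed
  moreover have "\<forall>e\<in>E2. 0 \<le> F e"
    using assms(9) by (simp add: is_st_flow_def)
  ultimately show "is_st_flow src dst E2 m t F v"
    by (simp add: is_st_flow_def)
qed

lemma is_st_flow_series_join:
  assumes "finite E1" "finite E2" "E1 \<inter> E2 = {}" "nodes src dst E1 \<inter> nodes src dst E2 = {m}"
    and "s \<noteq> m" "m \<noteq> t" "s \<in> nodes src dst E1" "t \<in> nodes src dst E2"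
    and "is_st_flow src dst E1 s m F v" "is_st_flow src dst E2 m t F v"
  shows "is_st_flow src dst (E1 \<union> E2) s t F v"
proof -
  have s2: "s \<notin> nodes src dst E2"
    using assms(4,5,7) by blast
  have t1: "t \<notin> nodes src dst E1"
    using assms(4,6,8) by (metis IntI singletonD)
  have sink1: "inflow dst E1 F m - outflow src E1 F m = v"
    by (rule is_st_flow_sink_value[OF assms(1,5,9)])
  have junction: "x = m" if "x \<in> nodes src dst E1" "x \<in> nodes src dst E2" for x
    using that assms(4) by blast
  have "inflow dst (E1 \<union> E2) F u = outflow src (E1 \<union> E2) F u"
    if u: "u \<in> nodes src dst (E1 \<union> E2)" "u \<noteq> s" "u \<noteq> t" for u
  proof -
    consider "u = m" | "u \<noteq> m" "u \<in> nodes src dst E1" "u \<notin> nodes src dst E2"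
      | "u \<noteq> m" "u \<in> nodes src dst E2" "u \<notin> nodes src dst E1"
      using u(1) junction unfolding nodes_Un by blast
    then show ?thesis
    proof cases
      case 1
      with sink1 assms(10) show ?thesis
        by (simp add: is_st_flow_def inflow_Un[OF assms(1-3)] outflow_Un[OF assms(1-3)])
    next
      case 2
      with u(2) assms(9) have "inflow dst E1 F u = outflow src E1 F u"
        unfolding is_st_flow_def by blast
      with 2 show ?thesis
        by (simp add: inflow_Un_left outflow_Un_left)
    next
      case 3
      with u(3) assms(10) have "inflow dst E2 F u = outflow src E2 F u"
        unfolding is_st_flow_def by blast
      with 3 show ?thesis
        by (simp add: inflow_Un_right outflow_Un_right)
    qed
  qed
  moreover have "outflow src (E1 \<union> E2) F s - inflow dst (E1 \<union> E2) F s = v"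
    using assms(9) s2 by (simp add: is_st_flow_def inflow_Un_left outflow_Un_left)
  moreover have "\<forall>e\<in>E1 \<union> E2. 0 \<le> F e"
    using assms(9,10) by (auto simp: is_st_flow_def)
  ultimately show ?thesis
    unfolding is_st_flow_def by blast
qed

section \<open>Feasible and minimum-delay flows\<close>

context
  fixes src dst :: "'e \<Rightarrow> 'v"
begin

definition feasible_flow :: "'e set \<Rightarrow> 'v \<Rightarrow> 'v \<Rightarrow> ('e \<Rightarrow> real) \<Rightarrow> ('e \<Rightarrow> real) \<Rightarrow> real \<Rightarrow> bool"
  where "feasible_flow E s t c F v \<longleftrightarrow> is_st_flow src dst E s t F v \<and> (\<forall>e\<in>E. F e \<le> c e)"

definition min_cost_flow ::
  "'e set \<Rightarrow> 'v \<Rightarrow> 'v \<Rightarrow> ('e \<Rightarrow> real) \<Rightarrow> ('e \<Rightarrow> real) \<Rightarrow> ('e \<Rightarrow> real) \<Rightarrow> real \<Rightarrow> bool"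
  where "min_cost_flow E s t c d F v \<longleftrightarrow> feasible_flow E s t c F v \<and>
     (\<forall>G. feasible_flow E s t c G v \<longrightarrow> agent_delay E d F \<le> agent_delay E d G)"

lemma min_cost_flow_feasible: "min_cost_flow E s t c d F v \<Longrightarrow> feasible_flow E s t c F v"
  by (simp add: min_cost_flow_def)

lemma min_cost_flowD:
  "min_cost_flow E s t c d F v \<Longrightarrow> feasible_flow E s t c G v \<Longrightarrow> agent_delay E d F \<le> agent_delay E d G"
  by (simp add: min_cost_flow_def)

lemma feasible_flow_cong:
  "feasible_flow E s t c F v \<Longrightarrow> (\<And>e. e \<in> E \<Longrightarrow> F e = G e) \<Longrightarrow> feasible_flow E s t c G v"
  unfolding feasible_flow_def using is_st_flow_cong by metis

lemma feasible_flow_restrict: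
  "feasible_flow E s t c (\<lambda>e. if e \<in> E then F e else 0) v \<longleftrightarrow> feasible_flow E s t c F v"
  by (rule iffI) (erule feasible_flow_cong; simp)+

lemma continuous_on_inflow: "continuous_on UNIV (\<lambda>F. inflow dst E F u)"
  unfolding inflow_def
  by (intro continuous_intros continuous_on_product_then_coordinatewise continuous_on_id)

lemma continuous_on_outflow: "continuous_on UNIV (\<lambda>F. outflow src E F u)"
  unfolding outflow_def
  by (intro continuous_intros continuous_on_product_then_coordinatewise continuous_on_id)

lemma continuous_on_agent_delay: "continuous_on UNIV (\<lambda>F. agent_delay E d F)"
  unfolding agent_delay_def
  by (intro continuous_intros continuous_on_product_then_coordinatewise continuous_on_id)

text \<open>Flows are functions on the whole edge type; vanishing off \<open>E\<close> makes the feasible ones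
  a closed subset of a product of compact intervals.\<close>
lemma compact_feasible_flows:
  "compact {F. (\<forall>e. e \<notin> E \<longrightarrow> F e = 0) \<and> (\<exists>v. feasible_flow E s t c F v)}"
proof -
  let ?box = "PiE UNIV (\<lambda>e. if e \<in> E then {0..c e} else {0})"
  let ?conserving = "\<Inter>u\<in>{u\<in>nodes src dst E. u \<noteq> s \<and> u \<noteq> t}.
    {F. inflow dst E F u = outflow src E F u}"
  have "compactin (product_topology (\<lambda>_. euclidean) UNIV) ?box"
    by (subst compactin_PiE) (auto simp: compactin_euclidean_iff)
  then have "compact ?box"
    by (simp add: euclidean_product_topology compactin_euclidean_iff)
  moreover have "closed ?conserving"
    by (intro closed_INT ballI closed_Collect_eq continuous_on_inflow continuous_on_outflow)
  moreover have "{F. (\<forall>e. e \<notin> E \<longrightarrow> F e = 0) \<and> (\<exists>v. feasible_flow E s t c F v)} = ?box \<inter> ?conserving"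
    by (auto simp: feasible_flow_def is_st_flow_def PiE_def Pi_def split: if_splits)
  ultimately show ?thesis
    by (simp add: compact_Int_closed)
qed

lemma feasible_flow_value:
  "feasible_flow E s t c F v \<Longrightarrow> v = outflow src E F s - inflow dst E F s"
  by (simp add: feasible_flow_def is_st_flow_def)

lemma feasible_flow_scale:
  assumes "feasible_flow E s t c F v" "0 \<le> a" "a \<le> 1"
  shows "feasible_flow E s t c (\<lambda>e. a * F e) (a * v)"
proof -
  have "a * F e \<le> c e" if "e \<in> E" for e
  proof -
    have "a * F e \<le> F e"
      using assms that by (intro mult_left_le_one_le) (auto simp: feasible_flow_def is_st_flow_def)
    also have "F e \<le> c e"
      using assms(1) that by (simp add: feasible_flow_def)
    finally show ?thesis .
  qed
  with assms show ?thesis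
    by (simp add: feasible_flow_def is_st_flow_scale)
qed

lemma min_cost_flow_exists:
  assumes "feasible_flow E s t c G v"
  obtains F where "min_cost_flow E s t c d F v"
proof -
  let ?K = "{F. (\<forall>e. e \<notin> E \<longrightarrow> F e = 0) \<and> (\<exists>w. feasible_flow E s t c F w)}
    \<inter> {F. outflow src E F s - inflow dst E F s = v}"
  have K_iff: "F \<in> ?K \<longleftrightarrow> (\<forall>e. e \<notin> E \<longrightarrow> F e = 0) \<and> feasible_flow E s t c F v" for F
    by (auto dest: feasible_flow_value simp: feasible_flow_def is_st_flow_def)
  have "closed {F. outflow src E F s - inflow dst E F s = v}"
    by (intro closed_Collect_eq continuous_on_diff continuous_on_inflow continuous_on_outflow
        continuous_on_const)
  then have "compact ?K"
    by (rule compact_Int_closed[OF compact_feasible_flows])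
  moreover have "(\<lambda>e. if e \<in> E then G e else 0) \<in> ?K"
    using assms unfolding K_iff by (simp add: feasible_flow_restrict)
  then have "?K \<noteq> {}"
    by (rule ex_in_conv[THEN iffD1, OF exI])
  moreover have "continuous_on ?K (agent_delay E d)"
    by (rule continuous_on_subset[OF continuous_on_agent_delay subset_UNIV])
  ultimately have "\<exists>F\<in>?K. \<forall>H\<in>?K. agent_delay E d F \<le> agent_delay E d H"
    by (rule continuous_attains_inf)
  then obtain F where F: "F \<in> ?K"
    and F_min: "\<forall>H\<in>?K. agent_delay E d F \<le> agent_delay E d H" ..
  have "agent_delay E d F \<le> agent_delay E d H" if "feasible_flow E s t c H v" for H
  proof -
    have "agent_delay E d F \<le> agent_delay E d (\<lambda>e. if e \<in> E then H e else 0)"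
      using that by (intro F_min[rule_format]) (simp only: K_iff feasible_flow_restrict, simp)
    also have "\<dots> = agent_delay E d H"
      by (rule agent_delay_cong) simp
    finally show ?thesis .
  qed
  moreover have "feasible_flow E s t c F v"
    using F unfolding K_iff by (rule conjunct2)
  ultimately show ?thesis
    by (intro that[of F]) (simp add: min_cost_flow_def)
qed

lemma max_flow_attained:
  assumes "\<forall>e\<in>E. 0 \<le> c e"
  obtains F V where "feasible_flow E s t c F V" "\<And>G w. feasible_flow E s t c G w \<Longrightarrow> w \<le> V"
proof -
  let ?K = "{F. (\<forall>e. e \<notin> E \<longrightarrow> F e = 0) \<and> (\<exists>w. feasible_flow E s t c F w)}"
  let ?value = "\<lambda>F. outflow src E F s - inflow dst E F s"
  have "feasible_flow E s t c (\<lambda>e. 0) 0"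
    using assms by (simp add: feasible_flow_def is_st_flow_def inflow_def outflow_def)
  then have "(\<lambda>e. 0) \<in> ?K"
    unfolding mem_Collect_eq by blast
  then have "?K \<noteq> {}"
    by (rule ex_in_conv[THEN iffD1, OF exI])
  moreover have "continuous_on ?K ?value"
    by (rule continuous_on_subset[OF continuous_on_diff[OF continuous_on_outflow continuous_on_inflow]
          subset_UNIV])
  ultimately have "\<exists>F\<in>?K. \<forall>H\<in>?K. ?value H \<le> ?value F"
    by (rule continuous_attains_sup[OF compact_feasible_flows])
  then obtain F where F: "F \<in> ?K" and F_max: "\<forall>H\<in>?K. ?value H \<le> ?value F" ..
  show ?thesis
  proof (rule that)
    show "feasible_flow E s t c F (?value F)"
      using F feasible_flow_value by blast
    fix G w
    assume G: "feasible_flow E s t c G w"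
    then have "feasible_flow E s t c (\<lambda>e. if e \<in> E then G e else 0) w"
      by (simp only: feasible_flow_restrict)
    then have "(\<lambda>e. if e \<in> E then G e else 0) \<in> ?K"
      by auto
    then have "?value (\<lambda>e. if e \<in> E then G e else 0) \<le> ?value F"
      by (rule F_max[rule_format])
    moreover have "?value (\<lambda>e. if e \<in> E then G e else 0) = w"
      using \<open>feasible_flow E s t c (\<lambda>e. if e \<in> E then G e else 0) w\<close>
      by (rule feasible_flow_value[symmetric])
    ultimately show "w \<le> ?value F"
      by simp
  qed
qed

lemma feasible_flow_exists:
  assumes "\<forall>e\<in>E. 0 \<le> c e" "0 \<le> v" "v \<le> max_flow_value src dst E s t c"
  obtains F where "feasible_flow E s t c F v"
proof -
  obtain \<Phi> V where \<Phi>: "feasible_flow E s t c \<Phi> V" and V_max: "\<And>G w. feasible_flow E s t c G w \<Longrightarrow> w \<le> V"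
    using max_flow_attained[OF assms(1)] by blast
  have "max_flow_value src dst E s t c \<le> V"
    unfolding max_flow_value_def
    using \<Phi> V_max by (intro cSup_least) (auto simp: feasible_flow_def)
  \<comment> \<open>if \<open>V = 0\<close> then also \<open>v = 0\<close>, and \<open>v / V = 0\<close> scales to the zero flow\<close>
  with assms(2,3) have "0 \<le> v / V" "v / V \<le> 1" "v / V * V = v"
    by (auto simp: divide_le_eq_1)
  with feasible_flow_scale[OF \<Phi>, of "v / V"] that show ?thesis
    by metis
qed

lemma feasible_flow_parallel_split:
  assumes "finite E1" "finite E2" "E1 \<inter> E2 = {}" "nodes src dst E1 \<inter> nodes src dst E2 = {s, t}"
    and "feasible_flow (E1 \<union> E2) s t c F v"
  obtains v1 v2 where "v = v1 + v2" "feasible_flow E1 s t c F v1" "feasible_flow E2 s t c F v2"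
proof -
  have flow: "is_st_flow src dst (E1 \<union> E2) s t F v" and cap: "\<forall>e\<in>E1 \<union> E2. F e \<le> c e"
    using assms(5) by (simp_all add: feasible_flow_def)
  obtain v1 v2 where "v = v1 + v2" "is_st_flow src dst E1 s t F v1" "is_st_flow src dst E2 s t F v2"
    by (rule is_st_flow_parallel_split[OF assms(1-4) flow])
  with cap show ?thesis
    by (intro that) (simp_all add: feasible_flow_def)
qed

lemma feasible_flow_series_split:
  assumes "finite E1" "finite E2" "E1 \<inter> E2 = {}" "nodes src dst E1 \<inter> nodes src dst E2 = {m}"
    and "s \<noteq> m" "m \<noteq> t" "s \<in> nodes src dst E1" "t \<in> nodes src dst E2"
    and "feasible_flow (E1 \<union> E2) s t c F v"
  shows "feasible_flow E1 s m c F v" "feasible_flow E2 m t c F v"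
  using assms(9) is_st_flow_series_split[OF assms(1-8)] by (simp_all add: feasible_flow_def)

lemma feasible_flow_glue:
  assumes "E1 \<inter> E2 = {}" "feasible_flow E1 s1 t1 c F1 v1" "feasible_flow E2 s2 t2 c F2 v2"
  shows "feasible_flow E1 s1 t1 c (\<lambda>e. if e \<in> E1 then F1 e else F2 e) v1"
    and "feasible_flow E2 s2 t2 c (\<lambda>e. if e \<in> E1 then F1 e else F2 e) v2"
proof -
  show "feasible_flow E1 s1 t1 c (\<lambda>e. if e \<in> E1 then F1 e else F2 e) v1"
    by (rule feasible_flow_cong[OF assms(2)]) simp
  show "feasible_flow E2 s2 t2 c (\<lambda>e. if e \<in> E1 then F1 e else F2 e) v2"
    by (rule feasible_flow_cong[OF assms(3)]) (use assms(1) in auto)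
qed

lemma feasible_flow_parallel_join:
  assumes "finite E1" "finite E2" "E1 \<inter> E2 = {}" "nodes src dst E1 \<inter> nodes src dst E2 = {s, t}"
    and "feasible_flow E1 s t c F1 v1" "feasible_flow E2 s t c F2 v2"
  shows "feasible_flow (E1 \<union> E2) s t c (\<lambda>e. if e \<in> E1 then F1 e else F2 e) (v1 + v2)"
  using feasible_flow_glue[OF assms(3,5,6)] is_st_flow_parallel_join[OF assms(1-4)]
  unfolding feasible_flow_def ball_Un by blast

lemma feasible_flow_series_join:
  assumes "finite E1" "finite E2" "E1 \<inter> E2 = {}" "nodes src dst E1 \<inter> nodes src dst E2 = {m}"
    and "s \<noteq> m" "m \<noteq> t" "s \<in> nodes src dst E1" "t \<in> nodes src dst E2"
    and "feasible_flow E1 s m c F1 v" "feasible_flow E2 m t c F2 v"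
  shows "feasible_flow (E1 \<union> E2) s t c (\<lambda>e. if e \<in> E1 then F1 e else F2 e) v"
  using feasible_flow_glue[OF assms(3,9,10)] is_st_flow_series_join[OF assms(1-8)]
  unfolding feasible_flow_def ball_Un by blast

lemma agent_delay_glue:
  assumes "finite E1" "finite E2" "E1 \<inter> E2 = {}"
  shows "agent_delay (E1 \<union> E2) d (\<lambda>e. if e \<in> E1 then F1 e else F2 e)
    = agent_delay E1 d F1 + agent_delay E2 d F2"
proof -
  have "agent_delay E1 d (\<lambda>e. if e \<in> E1 then F1 e else F2 e) = agent_delay E1 d F1"
    by (intro agent_delay_cong) simp
  moreover have "agent_delay E2 d (\<lambda>e. if e \<in> E1 then F1 e else F2 e) = agent_delay E2 d F2"
    using assms(3) by (intro agent_delay_cong) auto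
  ultimately show ?thesis
    by (simp add: agent_delay_Un[OF assms])
qed

lemma min_cost_flow_on_part:
  assumes "min_cost_flow E s t c d F v" "finite E" "E1 \<subseteq> E" "feasible_flow E1 s1 t1 c F v1"
    and "\<And>K. feasible_flow E1 s1 t1 c K v1 \<Longrightarrow>
      feasible_flow E s t c (\<lambda>e. if e \<in> E1 then K e else F e) v"
  shows "min_cost_flow E1 s1 t1 c d F v1"
proof -
  have E_split: "E = E1 \<union> (E - E1)" and fin: "finite E1" "finite (E - E1)" "E1 \<inter> (E - E1) = {}"
    using assms(2,3) finite_subset by auto
  have "agent_delay E1 d F \<le> agent_delay E1 d K" if "feasible_flow E1 s1 t1 c K v1" for K
  proof -
    have "agent_delay E d F \<le> agent_delay E d (\<lambda>e. if e \<in> E1 then K e else F e)"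
      by (rule min_cost_flowD[OF assms(1) assms(5)[OF that]])
    also have "\<dots> = agent_delay E1 d K + agent_delay (E - E1) d F"
      by (subst E_split) (rule agent_delay_glue[OF fin])
    finally show ?thesis
      using agent_delay_Un[OF fin, of d F] E_split by simp
  qed
  with assms(4) show ?thesis
    by (simp add: min_cost_flow_def)
qed

lemma min_cost_flow_if_delay_le:
  assumes "min_cost_flow E s t c d G v" "feasible_flow E s t c H v"
    and "agent_delay E d H \<le> agent_delay E d G"
  shows "min_cost_flow E s t c d H v"
  using assms order_trans unfolding min_cost_flow_def by blast

lemma feasible_flow_convex:
  assumes "feasible_flow E s t c F v" "feasible_flow E s t c G w" "0 \<le> \<mu>" "\<mu> \<le> 1"
  shows "feasible_flow E s t c (\<lambda>e. (1 - \<mu>) * F e + \<mu> * G e) ((1 - \<mu>) * v + \<mu> * w)"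
proof -
  have "0 \<le> F e" "0 \<le> G e" "F e \<le> c e" "G e \<le> c e" if "e \<in> E" for e
    using assms(1,2) that by (auto simp: feasible_flow_def is_st_flow_def)
  with assms show ?thesis
    unfolding feasible_flow_def by (auto intro!: is_st_flow_lincomb convex_bound_le)
qed

text \<open>The two new flows are convex combinations of \<open>F\<close> and \<open>G\<close> with complementary weights, so
  by linearity their delays add up to those of \<open>F\<close> and \<open>G\<close>.\<close>
lemma feasible_flow_shift_value:
  assumes "feasible_flow E s t c F v" "feasible_flow E s t c G w" "0 \<le> a" "a \<le> w - v"
  obtains M1 M2 where "feasible_flow E s t c M1 (v + a)" "feasible_flow E s t c M2 (w - a)"
    and "agent_delay E d M1 + agent_delay E d M2 = agent_delay E d F + agent_delay E d G"
proof -
  define \<mu> where "\<mu> = a / (w - v)"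
  have \<mu>: "0 \<le> \<mu>" "\<mu> \<le> 1" "\<mu> * (w - v) = a"
    using assms(3,4) by (auto simp: \<mu>_def divide_le_eq_1)
  show ?thesis
  proof (rule that)
    show "feasible_flow E s t c (\<lambda>e. (1 - \<mu>) * F e + \<mu> * G e) (v + a)"
      using feasible_flow_convex[OF assms(1,2) \<mu>(1,2)] \<mu>(3) by (simp add: algebra_simps)
    show "feasible_flow E s t c (\<lambda>e. (1 - \<mu>) * G e + \<mu> * F e) (w - a)"
      using feasible_flow_convex[OF assms(2,1) \<mu>(1,2)] \<mu>(3) by (simp add: algebra_simps)
    show "agent_delay E d (\<lambda>e. (1 - \<mu>) * F e + \<mu> * G e)
      + agent_delay E d (\<lambda>e. (1 - \<mu>) * G e + \<mu> * F e) = agent_delay E d F + agent_delay E d G"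
      by (simp only: agent_delay_lincomb) (simp add: algebra_simps)
  qed
qed

section \<open>Monotonicity of minimum-delay flows on series-parallel networks\<close>

definition min_cost_flows_monotone :: "'e set \<Rightarrow> 'v \<Rightarrow> 'v \<Rightarrow> ('e \<Rightarrow> real) \<Rightarrow> ('e \<Rightarrow> real) \<Rightarrow> bool"
  where "min_cost_flows_monotone E s t c d \<longleftrightarrow>
    (\<forall>F v v' G. min_cost_flow E s t c d F v \<and> v \<le> v' \<and> feasible_flow E s t c G v' \<longrightarrow>
      (\<exists>F'. min_cost_flow E s t c d F' v' \<and> (\<forall>e\<in>E. F e \<le> F' e)))"

lemma min_cost_flows_monotoneD:
  assumes "min_cost_flows_monotone E s t c d" "min_cost_flow E s t c d F v" "v \<le> v'"
    and "feasible_flow E s t c G v'"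
  obtains F' where "min_cost_flow E s t c d F' v'" "\<And>e. e \<in> E \<Longrightarrow> F e \<le> F' e"
  using assms unfolding min_cost_flows_monotone_def by blast

lemma min_cost_flows_monotone_single:
  assumes "src e \<noteq> dst e"
  shows "min_cost_flows_monotone {e} (src e) (dst e) c d"
proof -
  have "{x\<in>{e}. src x = src e} = {e}"
    by auto
  then have "outflow src {e} F (src e) = F e" for F
    unfolding outflow_def by simp
  moreover have "inflow dst {e} F (src e) = 0" for F
    unfolding inflow_def using assms by (intro sum.neutral) auto
  ultimately have edge_value: "feasible_flow {e} (src e) (dst e) c F v \<Longrightarrow> F e = v" for F v
    unfolding feasible_flow_def is_st_flow_def by simp
  have every_feasible_optimal: "min_cost_flow {e} (src e) (dst e) c d G v"
    if G: "feasible_flow {e} (src e) (dst e) c G v" for G v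
  proof -
    have "agent_delay {e} d G \<le> agent_delay {e} d H" if "feasible_flow {e} (src e) (dst e) c H v" for H
      using edge_value[OF G] edge_value[OF that] by (simp add: agent_delay_def)
    with G show ?thesis
      by (simp add: min_cost_flow_def)
  qed
  show ?thesis
    unfolding min_cost_flows_monotone_def
  proof (intro allI impI, elim conjE)
    fix F v v' G
    assume F: "min_cost_flow {e} (src e) (dst e) c d F v" and "v \<le> v'"
      and G: "feasible_flow {e} (src e) (dst e) c G v'"
    have "F e \<le> G e"
      using edge_value[OF min_cost_flow_feasible[OF F]] edge_value[OF G] \<open>v \<le> v'\<close> by simp
    with every_feasible_optimal[OF G]
    show "\<exists>F'. min_cost_flow {e} (src e) (dst e) c d F' v' \<and> (\<forall>x\<in>{e}. F x \<le> F' x)"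
      by auto
  qed
qed

lemma min_cost_flow_series_parts:
  assumes "finite E1" "finite E2" "E1 \<inter> E2 = {}" "nodes src dst E1 \<inter> nodes src dst E2 = {m}"
    and "s \<noteq> m" "m \<noteq> t" "s \<in> nodes src dst E1" "t \<in> nodes src dst E2"
    and F: "min_cost_flow (E1 \<union> E2) s t c d F v"
  shows "min_cost_flow E1 s m c d F v" "min_cost_flow E2 m t c d F v"
proof -
  note split = feasible_flow_series_split[OF assms(1-8) min_cost_flow_feasible[OF F]]
  note join = feasible_flow_series_join[OF assms(1-8)]
  have fin: "finite (E1 \<union> E2)"
    using assms(1,2) by simp
  show "min_cost_flow E1 s m c d F v"
  proof (rule min_cost_flow_on_part[OF F fin Un_upper1 split(1)])
    fix K
    assume "feasible_flow E1 s m c K v"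
    then show "feasible_flow (E1 \<union> E2) s t c (\<lambda>e. if e \<in> E1 then K e else F e) v"
      by (rule join[OF _ split(2)])
  qed
  show "min_cost_flow E2 m t c d F v"
  proof (rule min_cost_flow_on_part[OF F fin Un_upper2 split(2)])
    fix K
    assume "feasible_flow E2 m t c K v"
    then have "feasible_flow (E1 \<union> E2) s t c (\<lambda>e. if e \<in> E1 then F e else K e) v"
      by (rule join[OF split(1)])
    then show "feasible_flow (E1 \<union> E2) s t c (\<lambda>e. if e \<in> E2 then K e else F e) v"
      by (rule feasible_flow_cong) (use assms(3) in auto)
  qed
qed

lemma min_cost_flow_parallel_parts:
  assumes "finite E1" "finite E2" "E1 \<inter> E2 = {}" "nodes src dst E1 \<inter> nodes src dst E2 = {s, t}"
    and F: "min_cost_flow (E1 \<union> E2) s t c d F (v1 + v2)"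
    and F1: "feasible_flow E1 s t c F v1" and F2: "feasible_flow E2 s t c F v2"
  shows "min_cost_flow E1 s t c d F v1" "min_cost_flow E2 s t c d F v2"
proof -
  note join = feasible_flow_parallel_join[OF assms(1-4)]
  have fin: "finite (E1 \<union> E2)"
    using assms(1,2) by simp
  show "min_cost_flow E1 s t c d F v1"
  proof (rule min_cost_flow_on_part[OF F fin Un_upper1 F1])
    fix K
    assume "feasible_flow E1 s t c K v1"
    then show "feasible_flow (E1 \<union> E2) s t c (\<lambda>e. if e \<in> E1 then K e else F e) (v1 + v2)"
      by (rule join[OF _ F2])
  qed
  show "min_cost_flow E2 s t c d F v2"
  proof (rule min_cost_flow_on_part[OF F fin Un_upper2 F2])
    fix K
    assume "feasible_flow E2 s t c K v2"
    then have "feasible_flow (E1 \<union> E2) s t c (\<lambda>e. if e \<in> E1 then F e else K e) (v1 + v2)"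
      by (rule join[OF F1])
    then show "feasible_flow (E1 \<union> E2) s t c (\<lambda>e. if e \<in> E2 then K e else F e) (v1 + v2)"
      by (rule feasible_flow_cong) (use assms(3) in auto)
  qed
qed

lemma min_cost_flows_monotone_series:
  assumes "finite E1" "finite E2" "E1 \<inter> E2 = {}" "nodes src dst E1 \<inter> nodes src dst E2 = {m}"
    and "s \<noteq> m" "m \<noteq> t" "s \<in> nodes src dst E1" "t \<in> nodes src dst E2"
    and mono1: "min_cost_flows_monotone E1 s m c d" and mono2: "min_cost_flows_monotone E2 m t c d"
  shows "min_cost_flows_monotone (E1 \<union> E2) s t c d"
  unfolding min_cost_flows_monotone_def
proof (intro allI impI, elim conjE)
  fix F v v' G
  assume F: "min_cost_flow (E1 \<union> E2) s t c d F v" and "v \<le> v'"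
    and G: "feasible_flow (E1 \<union> E2) s t c G v'"
  note split = feasible_flow_series_split[OF assms(1-8)]
  note parts = min_cost_flow_series_parts[OF assms(1-8) F]
  obtain F1 where F1: "min_cost_flow E1 s m c d F1 v'" "\<And>e. e \<in> E1 \<Longrightarrow> F e \<le> F1 e"
    using min_cost_flows_monotoneD[OF mono1 parts(1) \<open>v \<le> v'\<close> split(1)[OF G]] by blast
  obtain F2 where F2: "min_cost_flow E2 m t c d F2 v'" "\<And>e. e \<in> E2 \<Longrightarrow> F e \<le> F2 e"
    using min_cost_flows_monotoneD[OF mono2 parts(2) \<open>v \<le> v'\<close> split(2)[OF G]] by blast
  let ?H = "\<lambda>e. if e \<in> E1 then F1 e else F2 e"
  have "feasible_flow (E1 \<union> E2) s t c ?H v'"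
    by (rule feasible_flow_series_join[OF assms(1-8) min_cost_flow_feasible[OF F1(1)]
          min_cost_flow_feasible[OF F2(1)]])
  moreover have "agent_delay (E1 \<union> E2) d ?H \<le> agent_delay (E1 \<union> E2) d K"
    if "feasible_flow (E1 \<union> E2) s t c K v'" for K
    using min_cost_flowD[OF F1(1) split(1)[OF that]] min_cost_flowD[OF F2(1) split(2)[OF that]]
    by (simp add: agent_delay_glue[OF assms(1-3)] agent_delay_Un[OF assms(1-3)])
  ultimately have "min_cost_flow (E1 \<union> E2) s t c d ?H v'"
    by (simp add: min_cost_flow_def)
  moreover have "F e \<le> ?H e" if "e \<in> E1 \<union> E2" for e
    using that F1(2) F2(2) by auto
  ultimately show "\<exists>F'. min_cost_flow (E1 \<union> E2) s t c d F' v' \<and> (\<forall>e\<in>E1 \<union> E2. F e \<le> F' e)"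
    by blast
qed

text \<open>With \<open>a = v1 - w1\<close>, split \<open>F + G\<close> on \<open>E2\<close> into flows \<open>M1, M2\<close> of values \<open>v2 + a\<close> and
  \<open>w2 - a\<close>. Comparing \<open>F\<close> with \<open>G\<close> on \<open>E1\<close> plus \<open>M1\<close> on \<open>E2\<close> (value \<open>v1 + v2\<close>) shows that
  \<open>F\<close> on \<open>E1\<close> plus the monotone extension of \<open>F\<close> to value \<open>w2 - a\<close> on \<open>E2\<close> costs at most
  as much as \<open>G\<close>.\<close>
lemma min_cost_flow_parallel_exchange:
  assumes "finite E1" "finite E2" "E1 \<inter> E2 = {}" "nodes src dst E1 \<inter> nodes src dst E2 = {s, t}"
    and mono2: "min_cost_flows_monotone E2 s t c d"
    and F: "min_cost_flow (E1 \<union> E2) s t c d F (v1 + v2)"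
      "feasible_flow E1 s t c F v1" "feasible_flow E2 s t c F v2"
    and G: "min_cost_flow (E1 \<union> E2) s t c d G (w1 + w2)"
      "feasible_flow E1 s t c G w1" "feasible_flow E2 s t c G w2"
    and "w1 < v1" "v1 + v2 \<le> w1 + w2"
  obtains F' where "min_cost_flow (E1 \<union> E2) s t c d F' (w1 + w2)"
    and "\<And>e. e \<in> E1 \<union> E2 \<Longrightarrow> F e \<le> F' e"
proof -
  note join = feasible_flow_parallel_join[OF assms(1-4)]
  note delay_glue = agent_delay_glue[OF assms(1-3)] and delay_Un = agent_delay_Un[OF assms(1-3)]
  define a where "a = v1 - w1"
  have "0 \<le> a" "a \<le> w2 - v2"
    using assms(12,13) by (simp_all add: a_def)
  then obtain M1 M2 where M1: "feasible_flow E2 s t c M1 (v2 + a)"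
    and M2: "feasible_flow E2 s t c M2 (w2 - a)"
    and M_delay: "agent_delay E2 d M1 + agent_delay E2 d M2 = agent_delay E2 d F + agent_delay E2 d G"
    by (rule feasible_flow_shift_value[OF F(3) G(3)])
  have "feasible_flow (E1 \<union> E2) s t c (\<lambda>e. if e \<in> E1 then G e else M1 e) (v1 + v2)"
    using join[OF G(2) M1] by (simp add: a_def add.commute)
  then have F_le: "agent_delay (E1 \<union> E2) d F \<le> agent_delay E1 d G + agent_delay E2 d M1"
    unfolding delay_glue[symmetric] by (rule min_cost_flowD[OF F(1)])
  have "v2 \<le> w2 - a"
    using \<open>a \<le> w2 - v2\<close> by simp
  then obtain F2' where F2': "min_cost_flow E2 s t c d F2' (w2 - a)" "\<And>e. e \<in> E2 \<Longrightarrow> F e \<le> F2' e"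
    using min_cost_flows_monotoneD[OF mono2 min_cost_flow_parallel_parts(2)[OF assms(1-4) F] _ M2]
    by blast
  let ?H = "\<lambda>e. if e \<in> E1 then F e else F2' e"
  have "feasible_flow (E1 \<union> E2) s t c ?H (v1 + (w2 - a))"
    by (rule join[OF F(2) min_cost_flow_feasible[OF F2'(1)]])
  then have "feasible_flow (E1 \<union> E2) s t c ?H (w1 + w2)"
    by (simp add: a_def add.commute)
  moreover have "agent_delay (E1 \<union> E2) d ?H \<le> agent_delay (E1 \<union> E2) d G"
  proof -
    have "agent_delay E2 d F2' \<le> agent_delay E2 d M2"
      by (rule min_cost_flowD[OF F2'(1) M2])
    with F_le M_delay show ?thesis
      by (simp add: delay_glue delay_Un)
  qed
  ultimately have "min_cost_flow (E1 \<union> E2) s t c d ?H (w1 + w2)"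
    by (rule min_cost_flow_if_delay_le[OF G(1)])
  moreover have "F e \<le> ?H e" if "e \<in> E1 \<union> E2" for e
    using that F2'(2) by auto
  ultimately show ?thesis
    by (rule that)
qed

lemma min_cost_flow_parallel_extend_both:
  assumes "finite E1" "finite E2" "E1 \<inter> E2 = {}" "nodes src dst E1 \<inter> nodes src dst E2 = {s, t}"
    and mono1: "min_cost_flows_monotone E1 s t c d" and mono2: "min_cost_flows_monotone E2 s t c d"
    and F: "min_cost_flow (E1 \<union> E2) s t c d F (v1 + v2)"
      "feasible_flow E1 s t c F v1" "feasible_flow E2 s t c F v2"
    and G: "min_cost_flow (E1 \<union> E2) s t c d G (w1 + w2)"
      "feasible_flow E1 s t c G w1" "feasible_flow E2 s t c G w2"
    and "v1 \<le> w1" "v2 \<le> w2"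
  obtains F' where "min_cost_flow (E1 \<union> E2) s t c d F' (w1 + w2)"
    and "\<And>e. e \<in> E1 \<union> E2 \<Longrightarrow> F e \<le> F' e"
proof -
  note parts = min_cost_flow_parallel_parts[OF assms(1-4) F]
  obtain F1' where F1': "min_cost_flow E1 s t c d F1' w1" "\<And>e. e \<in> E1 \<Longrightarrow> F e \<le> F1' e"
    using min_cost_flows_monotoneD[OF mono1 parts(1) \<open>v1 \<le> w1\<close> G(2)] by blast
  obtain F2' where F2': "min_cost_flow E2 s t c d F2' w2" "\<And>e. e \<in> E2 \<Longrightarrow> F e \<le> F2' e"
    using min_cost_flows_monotoneD[OF mono2 parts(2) \<open>v2 \<le> w2\<close> G(3)] by blast
  let ?H = "\<lambda>e. if e \<in> E1 then F1' e else F2' e"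
  have "feasible_flow (E1 \<union> E2) s t c ?H (w1 + w2)"
    by (rule feasible_flow_parallel_join[OF assms(1-4) min_cost_flow_feasible[OF F1'(1)]
          min_cost_flow_feasible[OF F2'(1)]])
  moreover have "agent_delay (E1 \<union> E2) d ?H \<le> agent_delay (E1 \<union> E2) d G"
    using min_cost_flowD[OF F1'(1) G(2)] min_cost_flowD[OF F2'(1) G(3)]
    by (simp add: agent_delay_glue[OF assms(1-3)] agent_delay_Un[OF assms(1-3)])
  ultimately have "min_cost_flow (E1 \<union> E2) s t c d ?H (w1 + w2)"
    by (rule min_cost_flow_if_delay_le[OF G(1)])
  moreover have "F e \<le> ?H e" if "e \<in> E1 \<union> E2" for e
    using that F1'(2) F2'(2) by auto
  ultimately show ?thesis
    by (rule that)
qed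

lemma min_cost_flows_monotone_parallel:
  assumes "finite E1" "finite E2" "E1 \<inter> E2 = {}" "nodes src dst E1 \<inter> nodes src dst E2 = {s, t}"
    and mono1: "min_cost_flows_monotone E1 s t c d" and mono2: "min_cost_flows_monotone E2 s t c d"
  shows "min_cost_flows_monotone (E1 \<union> E2) s t c d"
  unfolding min_cost_flows_monotone_def
proof (intro allI impI, elim conjE)
  fix F v v' G0
  assume F: "min_cost_flow (E1 \<union> E2) s t c d F v" and "v \<le> v'"
    and "feasible_flow (E1 \<union> E2) s t c G0 v'"
  then obtain G where G: "min_cost_flow (E1 \<union> E2) s t c d G v'"
    by (blast elim: min_cost_flow_exists)
  obtain v1 v2 where v: "v = v1 + v2" and F1: "feasible_flow E1 s t c F v1"
    and F2: "feasible_flow E2 s t c F v2"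
    by (rule feasible_flow_parallel_split[OF assms(1-4) min_cost_flow_feasible[OF F]])
  obtain w1 w2 where w: "v' = w1 + w2" and G1: "feasible_flow E1 s t c G w1"
    and G2: "feasible_flow E2 s t c G w2"
    by (rule feasible_flow_parallel_split[OF assms(1-4) min_cost_flow_feasible[OF G]])
  have F_opt: "min_cost_flow (E1 \<union> E2) s t c d F (v1 + v2)"
    and G_opt: "min_cost_flow (E1 \<union> E2) s t c d G (w1 + w2)"
    using F G v w by simp_all
  have "v1 + v2 \<le> w1 + w2"
    using \<open>v \<le> v'\<close> v w by simp
  consider "w1 < v1" | "w2 < v2" | "v1 \<le> w1" "v2 \<le> w2"
    by linarith
  then obtain F' where F': "min_cost_flow (E1 \<union> E2) s t c d F' (w1 + w2)"
    and F_le: "\<And>e. e \<in> E1 \<union> E2 \<Longrightarrow> F e \<le> F' e"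
  proof cases
    case 1
    with \<open>v1 + v2 \<le> w1 + w2\<close> show ?thesis
      using min_cost_flow_parallel_exchange[OF assms(1-4) mono2 F_opt F1 F2 G_opt G1 G2] that
      by blast
  next
    case 2
    have "min_cost_flow (E2 \<union> E1) s t c d F (v2 + v1)" "min_cost_flow (E2 \<union> E1) s t c d G (w2 + w1)"
      using F_opt G_opt by (simp_all add: Un_commute add.commute)
    moreover have "E2 \<inter> E1 = {}" "nodes src dst E2 \<inter> nodes src dst E1 = {s, t}"
      "v2 + v1 \<le> w2 + w1"
      using assms(3,4) \<open>v1 + v2 \<le> w1 + w2\<close> by auto
    ultimately obtain F' where "min_cost_flow (E2 \<union> E1) s t c d F' (w2 + w1)"
      and "\<And>e. e \<in> E2 \<union> E1 \<Longrightarrow> F e \<le> F' e"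
      using min_cost_flow_parallel_exchange[OF assms(2,1) _ _ mono1 _ F2 F1 _ G2 G1 2] by blast
    then show ?thesis
      by (intro that[of F']) (simp_all add: Un_commute add.commute)
  next
    case 3
    then show ?thesis
      using min_cost_flow_parallel_extend_both[OF assms F_opt F1 F2 G_opt G1 G2] that by blast
  qed
  with w show "\<exists>F'. min_cost_flow (E1 \<union> E2) s t c d F' v' \<and> (\<forall>e\<in>E1 \<union> E2. F e \<le> F' e)"
    by blast
qed

lemma series_parallel_finite: "series_parallel src dst E s t \<Longrightarrow> finite E"
  by (induction rule: series_parallel.induct) auto

lemma series_parallel_terminals:
  "series_parallel src dst E s t \<Longrightarrow> s \<noteq> t \<and> s \<in> nodes src dst E \<and> t \<in> nodes src dst E"
  by (induction rule: series_parallel.induct) (auto simp: nodes_def)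

lemma series_parallel_min_cost_flows_monotone:
  "series_parallel src dst E s t \<Longrightarrow> min_cost_flows_monotone E s t c d"
proof (induction rule: series_parallel.induct)
  case (single e)
  then show ?case
    by (rule min_cost_flows_monotone_single)
next
  case (series E1 s m E2 t)
  have "s \<noteq> m" "s \<in> nodes src dst E1" "m \<noteq> t" "t \<in> nodes src dst E2"
    using series_parallel_terminals[OF series.hyps(1)] series_parallel_terminals[OF series.hyps(2)]
    by simp_all
  with series show ?case
    by (intro min_cost_flows_monotone_series series_parallel_finite[OF series.hyps(1)]
        series_parallel_finite[OF series.hyps(2)])
next
  case (parallel E1 s t E2)
  then show ?case
    by (intro min_cost_flows_monotone_parallel series_parallel_finite[OF parallel.hyps(1)]
        series_parallel_finite[OF parallel.hyps(2)])
qed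

section \<open>Allocations and their aggregate flow\<close>

lemma feasible_flow_aggregate:
  assumes "finite S" "feasible_for src dst E s t c r S f"
  shows "feasible_flow E s t c (\<lambda>e. \<Sum>i\<in>S. f i e) (\<Sum>i\<in>S. r i)"
  using assms is_st_flow_sum[OF assms(1), of src dst E s t f r]
  by (simp add: feasible_flow_def feasible_for_def supply_respecting_def)

lemma jointly_optimal_aggregate_min_cost:
  assumes "finite S" "\<forall>i\<in>S. 0 \<le> r i" "\<forall>e\<in>E. 0 \<le> d e"
    and opt: "jointly_optimal src dst E s t c d r S f"
  shows "min_cost_flow E s t c d (\<lambda>e. \<Sum>i\<in>S. f i e) (\<Sum>i\<in>S. r i)"
proof -
  define R where "R = (\<Sum>i\<in>S. r i)"
  have "0 \<le> R" "R / R \<le> 1"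
    using assms(2) by (simp_all add: R_def sum_nonneg)
  have "(\<Sum>i\<in>S. agent_delay E d (f i)) \<le> agent_delay E d K"
    if K: "feasible_flow E s t c K R" for K
  proof -
    \<comment> \<open>split \<open>K\<close> in proportion to the demands; if \<open>R = 0\<close> all demands vanish and
      \<open>R / R = 0\<close> yields the zero allocation\<close>
    define g where "g = (\<lambda>i e. r i / R * K e)"
    have "r i / R * R = r i" if "i \<in> S" for i
      using that assms(1,2) by (cases "R = 0") (simp_all add: R_def sum_nonneg_eq_0_iff)
    then have "is_st_flow src dst E s t (g i) (r i)" if "i \<in> S" for i
      using that is_st_flow_scale[of src dst E s t K R "r i / R"] K assms(2) \<open>0 \<le> R\<close>
      by (simp add: g_def feasible_flow_def)
    moreover have aggregate: "(\<Sum>i\<in>S. g i e) = R / R * K e" for e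
      unfolding g_def R_def by (simp only: sum_distrib_right[symmetric] sum_divide_distrib[symmetric])
    moreover have "R / R * K e \<le> c e" if "e \<in> E" for e
      using feasible_flow_scale[OF K] \<open>0 \<le> R\<close> \<open>R / R \<le> 1\<close> that by (simp add: feasible_flow_def)
    ultimately have "feasible_for src dst E s t c r S g"
      by (simp add: feasible_for_def supply_respecting_def)
    then have "(\<Sum>i\<in>S. agent_delay E d (f i)) \<le> (\<Sum>i\<in>S. agent_delay E d (g i))"
      using opt by (simp add: jointly_optimal_def)
    also have "\<dots> = R / R * agent_delay E d K"
      using agent_delay_lincomb[of E d "R / R" K 0 K]
      by (simp add: agent_delay_sum[OF assms(1), symmetric] aggregate)
    also have "\<dots> \<le> agent_delay E d K"
      using K assms(3) \<open>0 \<le> R\<close> \<open>R / R \<le> 1\<close>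
      by (intro mult_left_le_one_le agent_delay_nonneg) (auto simp: feasible_flow_def is_st_flow_def)
    finally show ?thesis .
  qed
  moreover have "feasible_flow E s t c (\<lambda>e. \<Sum>i\<in>S. f i e) R"
    using opt assms(1) by (simp add: feasible_flow_aggregate jointly_optimal_def R_def)
  ultimately show ?thesis
    by (simp add: min_cost_flow_def agent_delay_sum[OF assms(1)] R_def)
qed

lemma jointly_optimal_if_aggregate_min_cost:
  assumes "finite S" "\<forall>i\<in>S. is_st_flow src dst E s t (g i) (r i)"
    and opt: "min_cost_flow E s t c d (\<lambda>e. \<Sum>i\<in>S. g i e) (\<Sum>i\<in>S. r i)"
  shows "jointly_optimal src dst E s t c d r S g"
proof -
  have "feasible_for src dst E s t c r S g"
    using assms(2) min_cost_flow_feasible[OF opt]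
    by (simp add: feasible_for_def supply_respecting_def feasible_flow_def)
  moreover have "(\<Sum>i\<in>S. agent_delay E d (g i)) \<le> (\<Sum>i\<in>S. agent_delay E d (g' i))"
    if "feasible_for src dst E s t c r S g'" for g'
    using min_cost_flowD[OF opt feasible_flow_aggregate[OF assms(1) that]]
    by (simp add: agent_delay_sum[OF assms(1)])
  ultimately show ?thesis
    by (simp add: jointly_optimal_def)
qed

lemma jointly_optimal_extend:
  assumes "finite S" "i \<notin> S" "\<forall>j\<in>S. is_st_flow src dst E s t (f j) (r j)"
    and F': "min_cost_flow E s t c d F' (\<Sum>j\<in>insert i S. r j)"
    and le: "\<And>e. e \<in> E \<Longrightarrow> (\<Sum>j\<in>S. f j e) \<le> F' e"
  shows "jointly_optimal src dst E s t c d r (insert i S) (f(i := \<lambda>e. F' e - (\<Sum>j\<in>S. f j e)))"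
proof (rule jointly_optimal_if_aggregate_min_cost)
  let ?g = "f(i := \<lambda>e. F' e - (\<Sum>j\<in>S. f j e))"
  have "is_st_flow src dst E s t (\<lambda>e. \<Sum>j\<in>S. f j e) (\<Sum>j\<in>S. r j)"
    using assms(3) by (intro is_st_flow_sum[OF assms(1)]) auto
  then have "is_st_flow src dst E s t (\<lambda>e. F' e - (\<Sum>j\<in>S. f j e)) ((\<Sum>j\<in>insert i S. r j) - (\<Sum>j\<in>S. r j))"
    using min_cost_flow_feasible[OF F'] le by (intro is_st_flow_diff) (auto simp: feasible_flow_def)
  then show "\<forall>j\<in>insert i S. is_st_flow src dst E s t (?g j) (r j)"
    using assms(1-3) by auto
  have "(\<Sum>j\<in>S. ?g j e) = (\<Sum>j\<in>S. f j e)" for e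
    using assms(2) by (intro sum.cong) auto
  then have "(\<Sum>j\<in>insert i S. ?g j e) = F' e" for e
    using assms(1,2) by simp
  with F' show "min_cost_flow E s t c d (\<lambda>e. \<Sum>j\<in>insert i S. ?g j e) (\<Sum>j\<in>insert i S. r j)"
    by simp
qed (use assms(1) in simp)

end

theorem lemmaD3:
  fixes src dst :: "'e \<Rightarrow> 'v" and E :: "'e set" and s t :: 'v
    and c d :: "'e \<Rightarrow> real" and A :: "'a set" and r :: "'a \<Rightarrow> real"
  assumes "series_parallel src dst E s t"
    and "\<forall>e\<in>E. 0 < c e"
    and "\<forall>e\<in>E. 0 \<le> d e"
    and "finite A"
    and "\<forall>i\<in>A. 0 \<le> r i"
    and "max_flow_value src dst E s t c \<ge> (\<Sum>i\<in>A. r i)"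
  shows "extensible src dst E s t c d r A"
  unfolding extensible_def
proof (intro allI impI, elim conjE)
  fix S f i
  assume "S \<subseteq> A" and opt: "jointly_optimal src dst E s t c d r S f" and "i \<in> A - S"
  then have S: "finite S" "i \<notin> S" "\<forall>j\<in>S. 0 \<le> r j"
    using assms(4,5) finite_subset by auto
  let ?aggregate = "\<lambda>e. \<Sum>j\<in>S. f j e"
  let ?total = "\<Sum>j\<in>insert i S. r j"
  have c_nonneg: "\<forall>e\<in>E. 0 \<le> c e"
    using assms(2) by (simp add: less_imp_le)
  have "0 \<le> ?total"
    using S(3) \<open>i \<in> A - S\<close> assms(5) by (intro sum_nonneg) auto
  moreover have "?total \<le> max_flow_value src dst E s t c"
    using sum_mono2[OF assms(4), of "insert i S" r] \<open>S \<subseteq> A\<close> \<open>i \<in> A - S\<close> assms(5,6) by auto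
  ultimately obtain G where G: "feasible_flow src dst E s t c G ?total"
    by (rule feasible_flow_exists[OF c_nonneg])
  have "(\<Sum>j\<in>S. r j) \<le> ?total"
    using S assms(5) \<open>i \<in> A - S\<close> by simp
  then obtain F' where "min_cost_flow src dst E s t c d F' ?total"
    and "\<And>e. e \<in> E \<Longrightarrow> ?aggregate e \<le> F' e"
    using min_cost_flows_monotoneD[OF series_parallel_min_cost_flows_monotone[OF assms(1)]
        jointly_optimal_aggregate_min_cost[OF S(1,3) assms(3) opt] _ G]
    by blast
  then have "jointly_optimal src dst E s t c d r (insert i S) (f(i := \<lambda>e. F' e - ?aggregate e))"
    using opt S by (intro jointly_optimal_extend) (auto simp: jointly_optimal_def feasible_for_def)
  then show "\<exists>g. jointly_optimal src dst E s t c d r (insert i S) g \<and>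
      (\<forall>j\<in>S. agent_delay E d (g j) = agent_delay E d (f j))"
    using S(2) by fastforce
qed

end
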